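(* Let $(G,H)$ be a discrete Hecke pair which has a finite generating set $S$. If $(G,H)$ is of subexponential growth (with respect to a length function $l$ on $(G,H)$), then $(G,H)$ is amenable.
   Context: A discrete Hecke pair is a group $G$ with a subgroup $H$ such that $[H:H\cap xHx^{-1}]<\infty$ for all $x$. $S\subseteq G$ generates $(G,H)$ if $H\backslash G=\bigcup_nH\hat S^n$, $\hat S=S\cup S^{-1}\cup\{e\}$. A length function on $(G,H)$ is $l:G\to[0,\infty)$ with $l(e)=0$, $l(g)=l(g^{-1})$, $l(gh)\le l(g)+l(h)$ and $l|_H=0$. Its growth function is $\mathcal G_l(r)=\#\{Hx\in H\backslash G: l(x)\le r\}$. $(G,H)$ has subexponential growth with respect to $l$ if $\mathcal G_l(r)<\infty$ for all $r\ge0$ and $\lim_{r\to\infty}\frac{\ln\mathcal G_l(r)}{r}=0$. The pair $(G,H)$ is amenable if whenever $G$ acts continuously by affine transformations on a compact convex subset $Q$ of a locally convex topological vector space and the restricted action of $H$ has a fixed point in $Q$, the action of $G$ has a fixed point in $Q$. *)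

theory Defs
  imports "HOL-Analysis.Analysis" "HOL-Algebra.Coset"
begin

text \<open>Discrete Hecke pair: H is a subgroup of G and H \<inter> xHx^-1 has finite index in H.\<close>
definition hecke_pair :: "('g, 'b) monoid_scheme \<Rightarrow> 'g set \<Rightarrow> bool" where
  "hecke_pair G H \<longleftrightarrow> group G \<and> subgroup H G \<and>
     (\<forall>x \<in> carrier G.
        finite {r_coset G (H \<inter> r_coset G (l_coset G x H) (inv\<^bsub>G\<^esub> x)) h | h. h \<in> H})"

fun set_pow :: "('g, 'b) monoid_scheme \<Rightarrow> 'g set \<Rightarrow> nat \<Rightarrow> 'g set" where
  "set_pow G A 0 = {\<one>\<^bsub>G\<^esub>}"
| "set_pow G A (Suc n) = set_mult G (set_pow G A n) A"

definition sym_hat :: "('g, 'b) monoid_scheme \<Rightarrow> 'g set \<Rightarrow> 'g set" where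
  "sym_hat G S = S \<union> (\<lambda>s. inv\<^bsub>G\<^esub> s) ` S \<union> {\<one>\<^bsub>G\<^esub>}"

definition generates_hecke :: "('g, 'b) monoid_scheme \<Rightarrow> 'g set \<Rightarrow> 'g set \<Rightarrow> bool" where
  "generates_hecke G H S \<longleftrightarrow> S \<subseteq> carrier G \<and>
     (\<Union>n. set_mult G H (set_pow G (sym_hat G S) n)) = carrier G"

definition length_function :: "('g, 'b) monoid_scheme \<Rightarrow> 'g set \<Rightarrow> ('g \<Rightarrow> real) \<Rightarrow> bool" where
  "length_function G H l \<longleftrightarrow>
     (\<forall>g \<in> carrier G. l g \<ge> 0) \<and> l \<one>\<^bsub>G\<^esub> = 0 \<and>
     (\<forall>g \<in> carrier G. l (inv\<^bsub>G\<^esub> g) = l g) \<and>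
     (\<forall>g \<in> carrier G. \<forall>h \<in> carrier G. l (g \<otimes>\<^bsub>G\<^esub> h) \<le> l g + l h) \<and>
     (\<forall>h \<in> H. l h = 0)"

definition growth_set :: "('g, 'b) monoid_scheme \<Rightarrow> 'g set \<Rightarrow> ('g \<Rightarrow> real) \<Rightarrow> real \<Rightarrow> 'g set set" where
  "growth_set G H l r = {r_coset G H x | x. x \<in> carrier G \<and> l x \<le> r}"

definition growth_fun :: "('g, 'b) monoid_scheme \<Rightarrow> 'g set \<Rightarrow> ('g \<Rightarrow> real) \<Rightarrow> real \<Rightarrow> nat" where
  "growth_fun G H l r = card (growth_set G H l r)"

definition subexp_growth :: "('g, 'b) monoid_scheme \<Rightarrow> 'g set \<Rightarrow> ('g \<Rightarrow> real) \<Rightarrow> bool" where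
  "subexp_growth G H l \<longleftrightarrow>
     (\<forall>r \<ge> 0. finite (growth_set G H l r)) \<and>
     ((\<lambda>r. ln (real (growth_fun G H l r)) / r) \<longlongrightarrow> 0) at_top"

text \<open>Locally convex (Hausdorff, via the class t2_space) real topological vector space structure
  on the type 'v: addition and scalar multiplication are jointly continuous, and 0 has a
  neighbourhood base of convex open sets.\<close>
definition lctvs :: "'v::{real_vector, t2_space} itself \<Rightarrow> bool" where
  "lctvs _ \<longleftrightarrow>
     continuous_on UNIV (\<lambda>p::'v \<times> 'v. fst p + snd p) \<and>
     continuous_on UNIV (\<lambda>p::real \<times> 'v. fst p *\<^sub>R snd p) \<and>
     (\<forall>U::'v set. open U \<and> 0 \<in> U \<longrightarrow> (\<exists>V. open V \<and> convex V \<and> 0 \<in> V \<and> V \<subseteq> U))"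

definition affine_action_on :: "('g, 'b) monoid_scheme \<Rightarrow> 'v::{real_vector, topological_space} set
     \<Rightarrow> ('g \<Rightarrow> 'v \<Rightarrow> 'v) \<Rightarrow> bool" where
  "affine_action_on G Q \<alpha> \<longleftrightarrow>
     (\<forall>g \<in> carrier G. \<alpha> g ` Q \<subseteq> Q \<and> continuous_on Q (\<alpha> g) \<and>
        (\<forall>x \<in> Q. \<forall>y \<in> Q. \<forall>t::real. 0 \<le> t \<and> t \<le> 1 \<longrightarrow>
           \<alpha> g (t *\<^sub>R x + (1 - t) *\<^sub>R y) = t *\<^sub>R \<alpha> g x + (1 - t) *\<^sub>R \<alpha> g y)) \<and>
     (\<forall>x \<in> Q. \<alpha> \<one>\<^bsub>G\<^esub> x = x) \<and>
     (\<forall>g \<in> carrier G. \<forall>h \<in> carrier G. \<forall>x \<in> Q. \<alpha> (g \<otimes>\<^bsub>G\<^esub> h) x = \<alpha> g (\<alpha> h x))"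

text \<open>Amenability of (G,H), tested against locally convex spaces living on the type 'v.
  Quantifying the type variable 'v at theorem level gives the full notion.\<close>
definition hecke_amenable_in :: "'v::{real_vector, t2_space} itself \<Rightarrow> ('g, 'b) monoid_scheme \<Rightarrow> 'g set \<Rightarrow> bool" where
  "hecke_amenable_in T G H \<longleftrightarrow>
     (lctvs T \<longrightarrow>
       (\<forall>(Q::'v set) \<alpha>. compact Q \<and> convex Q \<and> affine_action_on G Q \<alpha> \<and>
          (\<exists>q \<in> Q. \<forall>h \<in> H. \<alpha> h q = q) \<longrightarrow>
          (\<exists>q \<in> Q. \<forall>g \<in> carrier G. \<alpha> g q = q)))"

end

theory Submission
  imports Defs
begin

(* Day's averaging argument. Average the points x\<inverse> q0, for H-fixed q0, over the ball
   B r = {Hx. l x \<le> r} of H\<backslash>G. Translation by g moves B r into B (r + l g), so g displaces the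
   average by |B (r + l g) - B r| / |B r| times a difference of two points of Q. Subexponential
   growth forbids this ratio from staying above 1/k for all r, so along suitable radii the averages
   are asymptotically G-invariant, and a cluster point in the compact set Q is G-fixed.
   Neither the generating set nor the finite-index condition of the Hecke pair is needed: the
   finiteness of the balls is already part of subexponential growth. *)

lemma compact_scaleR_uniformly_small:
  fixes K :: "'v::{real_vector, topological_space} set"
  assumes scale: "continuous_on UNIV (\<lambda>p::real \<times> 'v. fst p *\<^sub>R snd p)"
    and "compact K" and "open W" and "0 \<in> W"
  obtains \<delta> where "\<delta> > 0" and "\<And>t a. \<bar>t\<bar> < \<delta> \<Longrightarrow> a \<in> K \<Longrightarrow> t *\<^sub>R a \<in> W"
proof -
  define M where "M = (\<lambda>p::real \<times> 'v. fst p *\<^sub>R snd p) -` W"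
  have "open M" unfolding M_def using scale \<open>open W\<close> open_vimage by blast
  have "\<exists>d U. d > 0 \<and> open U \<and> z \<in> U \<and> (\<forall>t y. \<bar>t\<bar> < d \<and> y \<in> U \<longrightarrow> t *\<^sub>R y \<in> W)" for z
  proof -
    have "(0, z) \<in> M" using \<open>0 \<in> W\<close> by (simp add: M_def)
    then obtain A U where AU: "open A" "open U" "(0, z) \<in> A \<times> U" "A \<times> U \<subseteq> M"
      using open_prod_elim[OF \<open>open M\<close>] by metis
    then obtain d where "d > 0" "ball 0 d \<subseteq> A" using open_contains_ball by (metis SigmaE2)
    then have "t *\<^sub>R y \<in> W" if "\<bar>t\<bar> < d" "y \<in> U" for t y
    proof -
      have "(t, y) \<in> A \<times> U" using that \<open>ball 0 d \<subseteq> A\<close> by (auto simp: dist_real_def)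
      then show ?thesis using AU(4) by (auto simp: M_def)
    qed
    then show ?thesis using \<open>d > 0\<close> AU by blast
  qed
  then obtain d U where dU: "\<And>z. d z > 0 \<and> open (U z) \<and> z \<in> U z \<and>
      (\<forall>t y. \<bar>t\<bar> < d z \<and> y \<in> U z \<longrightarrow> t *\<^sub>R y \<in> W)"
    by metis
  obtain C where C: "C \<subseteq> K" "finite C" "K \<subseteq> (\<Union>c\<in>C. U c)"
    using compactE_image[OF \<open>compact K\<close>, of K U] dU by blast
  define \<delta> where "\<delta> = Min (insert 1 (d ` C))"
  show ?thesis
  proof
    show "\<delta> > 0" unfolding \<delta>_def using C dU by auto
  next
    fix t a assume "\<bar>t\<bar> < \<delta>" "a \<in> K"
    then obtain c where "c \<in> C" "a \<in> U c" using C by auto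
    moreover have "\<delta> \<le> d c" unfolding \<delta>_def using \<open>c \<in> C\<close> C by auto
    ultimately show "t *\<^sub>R a \<in> W" using dU[of c] \<open>\<bar>t\<bar> < \<delta>\<close> by auto
  qed
qed

lemma tendsto_add_continuous_add:
  fixes f g :: "'a \<Rightarrow> 'v::{real_vector, topological_space}"
  assumes "continuous_on UNIV (\<lambda>p::'v \<times> 'v. fst p + snd p)"
    and "(f \<longlongrightarrow> a) F" and "(g \<longlongrightarrow> b) F"
  shows "((\<lambda>x. f x + g x) \<longlongrightarrow> a + b) F"
  using continuous_on_tendsto_compose[OF assms(1) tendsto_Pair[OF assms(2,3)]] by simp

definition scaled_differences :: "real \<Rightarrow> 'v::real_vector set \<Rightarrow> 'v set" where
  "scaled_differences \<epsilon> Q = {t *\<^sub>R (a - b) | t a b. 0 \<le> t \<and> t \<le> \<epsilon> \<and> a \<in> Q \<and> b \<in> Q}"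

lemma scaled_differences_mono: "\<epsilon> \<le> \<epsilon>' \<Longrightarrow> scaled_differences \<epsilon> Q \<subseteq> scaled_differences \<epsilon>' Q"
  unfolding scaled_differences_def by force

lemma tendsto_zero_scaled_differences:
  fixes Q :: "'v::{real_vector, topological_space} set"
  assumes add: "continuous_on UNIV (\<lambda>p::'v \<times> 'v. fst p + snd p)"
    and scale: "continuous_on UNIV (\<lambda>p::real \<times> 'v. fst p *\<^sub>R snd p)"
    and "compact Q"
    and small: "\<And>\<epsilon>. \<epsilon> > 0 \<Longrightarrow> eventually (\<lambda>x. f x \<in> scaled_differences \<epsilon> Q) F"
  shows "(f \<longlongrightarrow> 0) F"
proof (rule topological_tendstoI)
  fix W :: "'v set" assume "open W" "0 \<in> W"
  define S where "S = (\<lambda>p::'v \<times> 'v. fst p + snd p) -` W"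
  have "open S" unfolding S_def using add \<open>open W\<close> open_vimage by blast
  moreover have "(0, 0) \<in> S" using \<open>0 \<in> W\<close> by (simp add: S_def)
  ultimately obtain A B where AB: "open A" "open B" "(0, 0) \<in> A \<times> B" "A \<times> B \<subseteq> S"
    using open_prod_elim by metis
  then obtain \<delta> where "\<delta> > 0" and \<delta>: "\<And>t a. \<bar>t\<bar> < \<delta> \<Longrightarrow> a \<in> Q \<Longrightarrow> t *\<^sub>R a \<in> A \<inter> B"
    using compact_scaleR_uniformly_small[OF scale \<open>compact Q\<close>, of "A \<inter> B"] AB by blast
  have "v \<in> W" if v: "v \<in> scaled_differences (\<delta> / 2) Q" for v
  proof -
    obtain t a b where tab: "v = t *\<^sub>R (a - b)" "0 \<le> t" "t \<le> \<delta> / 2" "a \<in> Q" "b \<in> Q"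
      using v unfolding scaled_differences_def by blast
    then have "t *\<^sub>R a \<in> A" "(- t) *\<^sub>R b \<in> B" using \<delta>[of t a] \<delta>[of "- t" b] \<open>\<delta> > 0\<close> by auto
    then have "t *\<^sub>R a + (- t) *\<^sub>R b \<in> W" using AB(4) by (auto simp: S_def)
    then show "v \<in> W" using tab(1) by (simp add: scaleR_diff_right)
  qed
  then show "eventually (\<lambda>x. f x \<in> W) F"
    using small[of "\<delta> / 2"] \<open>\<delta> > 0\<close> by (auto elim: eventually_mono)
qed

lemma compact_asymptotically_invariant_cluster_point:
  fixes Q :: "'v::{real_vector, t2_space} set"
  assumes add: "continuous_on UNIV (\<lambda>p::'v \<times> 'v. fst p + snd p)"
    and "compact Q" and q: "\<And>k. q k \<in> Q"
  obtains p where "p \<in> Q"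
    and "\<And>T. continuous_on Q T \<Longrightarrow> ((\<lambda>k. T (q k) - q k) \<longlongrightarrow> 0) sequentially \<Longrightarrow> T p = p"
proof -
  have "eventually (\<lambda>x. x \<in> Q) (filtermap q sequentially)"
    using q by (simp add: eventually_filtermap)
  moreover have "filtermap q sequentially \<noteq> bot" by (simp add: filtermap_bot_iff)
  ultimately obtain p where "p \<in> Q" and nontriv: "inf (nhds p) (filtermap q sequentially) \<noteq> bot"
    using \<open>compact Q\<close> unfolding compact_filter by blast
  define F where "F = inf (nhds p) (filtermap q sequentially)"
  have "T p = p" if T: "continuous_on Q T" and lim: "((\<lambda>k. T (q k) - q k) \<longlongrightarrow> 0) sequentially" for T
  proof -
    have ident: "((\<lambda>x. x) \<longlongrightarrow> p) F"
      unfolding F_def by (rule tendsto_mono[OF inf_le1 filterlim_ident])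
    have "eventually (\<lambda>x. x \<in> Q) F"
      unfolding F_def using q by (auto intro: filter_leD[OF inf_le2] simp: eventually_filtermap)
    then have "(T \<longlongrightarrow> T p) F"
      using continuous_on_tendsto_compose[OF T ident \<open>p \<in> Q\<close>] by simp
    moreover have "((\<lambda>x. T x - x) \<longlongrightarrow> 0) F"
      unfolding F_def using lim by (intro tendsto_mono[OF inf_le2]) (simp add: filterlim_filtermap)
    then have "((\<lambda>x. (T x - x) + x) \<longlongrightarrow> 0 + p) F"
      using tendsto_add_continuous_add[OF add _ ident] by blast
    then have "(T \<longlongrightarrow> p) F" by simp
    ultimately show ?thesis
      using tendsto_unique nontriv unfolding F_def by blast
  qed
  then show ?thesis using that \<open>p \<in> Q\<close> by blast
qed

text \<open>If every shell of width k increased the count by a factor 1 + 1/k, the count would grow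
  exponentially.\<close>
lemma subexponential_growth_imp_slow_shell:
  fixes N :: "real \<Rightarrow> real" and k :: nat
  assumes N1: "\<And>r. r \<ge> 0 \<Longrightarrow> N r \<ge> 1"
    and subexp: "((\<lambda>r. ln (N r) / r) \<longlongrightarrow> 0) at_top"
    and "k > 0"
  shows "\<exists>r\<ge>0. N (r + real k) \<le> (1 + 1 / real k) * N r"
proof (rule ccontr)
  define b where "b = 1 + 1 / real k"
  have "b > 1" using \<open>k > 0\<close> by (simp add: b_def)
  assume "\<not> ?thesis"
  then have step: "N (r + real k) > b * N r" if "r \<ge> 0" for r
    using that by (force simp: b_def)
  have pow: "N (real n * real k) \<ge> b ^ n" for n
  proof (induction n)
    case 0
    then show ?case using N1[of 0] by simp
  next
    case (Suc n)
    have "b ^ Suc n \<le> b * N (real n * real k)"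
      using Suc \<open>b > 1\<close> by simp
    also have "\<dots> < N (real n * real k + real k)"
      by (rule step) simp
    finally show ?case by (simp add: algebra_simps)
  qed
  define c where "c = ln b / real k"
  have "c > 0" using \<open>b > 1\<close> \<open>k > 0\<close> by (simp add: c_def)
  then obtain R where R: "\<And>r. r \<ge> R \<Longrightarrow> ln (N r) / r < c"
    using order_tendstoD(2)[OF subexp] by (auto simp: eventually_at_top_linorder)
  define n where "n = nat \<lceil>R\<rceil> + 1"
  define r where "r = real n * real k"
  have "n \<ge> 1" and "r > 0" using \<open>k > 0\<close> by (simp_all add: n_def r_def)
  have "r \<ge> R"
  proof -
    have "R \<le> real n" unfolding n_def by linarith
    also have "real n * 1 \<le> r" unfolding r_def using \<open>k > 0\<close> by (intro mult_left_mono) auto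

    finally show ?thesis by simp
  qed
  have "real n * ln b = ln (b ^ n)" by (simp add: ln_realpow)
  also have "\<dots> \<le> ln (N r)" using pow[of n] \<open>b > 1\<close> by (intro ln_mono) (simp_all add: r_def)
  finally have "real n * ln b \<le> ln (N r)" .
  then have "real n * ln b / r \<le> ln (N r) / r"
    using \<open>r > 0\<close> by (simp add: divide_right_mono)
  moreover have "real n * ln b / r = c" using \<open>n \<ge> 1\<close> by (simp add: c_def r_def)
  ultimately have "c \<le> ln (N r) / r" by simp
  then show False using R[OF \<open>r \<ge> R\<close>] by linarith
qed

lemma affine_on_convex_sum:
  fixes T :: "'v::real_vector \<Rightarrow> 'w::real_vector"
  assumes "convex Q"
    and affine: "\<And>x y t. x \<in> Q \<Longrightarrow> y \<in> Q \<Longrightarrow> 0 \<le> t \<Longrightarrow> t \<le> 1 \<Longrightarrow>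
      T (t *\<^sub>R x + (1 - t) *\<^sub>R y) = t *\<^sub>R T x + (1 - t) *\<^sub>R T y"
    and "finite A" "\<And>i. i \<in> A \<Longrightarrow> 0 \<le> w i" "sum w A = 1" "\<And>i. i \<in> A \<Longrightarrow> p i \<in> Q"
  shows "T (\<Sum>i\<in>A. w i *\<^sub>R p i) = (\<Sum>i\<in>A. w i *\<^sub>R T (p i))"
  using assms(3-)
proof (induction A arbitrary: w rule: finite_induct)
  case empty
  then show ?case by simp
next
  case (insert a A)
  define s where "s = sum w A"
  have "s \<ge> 0" unfolding s_def using insert by (auto intro: sum_nonneg)
  have wa: "w a = 1 - s" using insert unfolding s_def by simp
  show ?case
  proof (cases "s = 0")
    case True
    then have "\<forall>i\<in>A. w i = 0" using insert sum_nonneg_eq_0_iff[of A w] by (auto simp: s_def)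
    then show ?thesis using insert wa True by simp
  next
    case False
    with \<open>s \<ge> 0\<close> have "s > 0" by simp
    define z where "z = (\<Sum>i\<in>A. (w i / s) *\<^sub>R p i)"
    have weights: "\<And>i. i \<in> A \<Longrightarrow> 0 \<le> w i / s" "(\<Sum>i\<in>A. w i / s) = 1"
      using insert \<open>s > 0\<close> by (simp_all add: s_def sum_divide_distrib[symmetric])
    have "z \<in> Q"
      unfolding z_def using convex_sum[OF \<open>finite A\<close> \<open>convex Q\<close>] weights insert by auto
    have Tz: "T z = (\<Sum>i\<in>A. (w i / s) *\<^sub>R T (p i))"
      unfolding z_def using insert.IH weights insert.prems by auto
    have "T (\<Sum>i\<in>insert a A. w i *\<^sub>R p i) = T (w a *\<^sub>R p a + (1 - w a) *\<^sub>R z)"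
      using insert \<open>s > 0\<close> wa by (simp add: z_def scaleR_sum_right)
    also have "\<dots> = w a *\<^sub>R T (p a) + (1 - w a) *\<^sub>R T z"
      using affine[of "p a" z "w a"] \<open>z \<in> Q\<close> insert insert.prems(1)[of a] \<open>s \<ge> 0\<close> wa by simp
    also have "\<dots> = (\<Sum>i\<in>insert a A. w i *\<^sub>R T (p i))"
      using insert Tz wa \<open>s > 0\<close> by (simp add: scaleR_sum_right)
    finally show ?thesis .
  qed
qed

lemma sum_diff_eq_card_diff_scaleR_convex:
  fixes f :: "'a \<Rightarrow> 'v::real_vector"
  assumes "convex Q" "Q \<noteq> {}" "finite A" "finite B" "card A = card B"
    and fQ: "\<And>x. x \<in> A \<union> B \<Longrightarrow> f x \<in> Q"
  obtains a b where "a \<in> Q" "b \<in> Q" "sum f A - sum f B = real (card (A - B)) *\<^sub>R (a - b)"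
proof -
  define m where "m = card (A - B)"
  have "card (B - A) = m"
    unfolding m_def using card_Diff_subset_Int[of A B] card_Diff_subset_Int[of B A] assms(3-5)
    by (simp add: Int_commute)
  have diff: "sum f A - sum f B = sum f (A - B) - sum f (B - A)"
    using sum.Int_Diff[OF \<open>finite A\<close>, of f B] sum.Int_Diff[OF \<open>finite B\<close>, of f A]
    by (simp add: Int_commute)
  show ?thesis
  proof (cases "m = 0")
    case True
    then have "A - B = {}" "B - A = {}"
      using \<open>card (B - A) = m\<close> assms(3,4) by (metis card_0_eq finite_Diff m_def)+
    moreover obtain a where "a \<in> Q" using \<open>Q \<noteq> {}\<close> by blast
    ultimately show ?thesis using that[of a a] diff True m_def by simp
  next
    case False
    define a where "a = (\<Sum>x\<in>A - B. (1 / real m) *\<^sub>R f x)"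
    define b where "b = (\<Sum>x\<in>B - A. (1 / real m) *\<^sub>R f x)"
    have "a \<in> Q" unfolding a_def
      using convex_sum[OF _ \<open>convex Q\<close>, of "A - B" "\<lambda>_. 1 / real m" f] False fQ assms(3)
      by (simp add: m_def)
    moreover have "b \<in> Q" unfolding b_def
      using convex_sum[OF _ \<open>convex Q\<close>, of "B - A" "\<lambda>_. 1 / real m" f] False fQ assms(4)
        \<open>card (B - A) = m\<close> by simp
    moreover have "sum f A - sum f B = real m *\<^sub>R (a - b)"
      using diff False by (simp add: a_def b_def scaleR_sum_right scaleR_diff_right)
    ultimately show ?thesis using that m_def by blast
  qed
qed

locale hecke_affine_action =
  fixes G :: "('g, 'b) monoid_scheme" (structure) and H :: "'g set" and l :: "'g \<Rightarrow> real"
    and Q :: "'v::{real_vector, t2_space} set" and \<alpha> :: "'g \<Rightarrow> 'v \<Rightarrow> 'v" and q0 :: 'v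
  assumes group: "group G" and subgroup: "subgroup H G"
    and length_function: "length_function G H l"
    and finite_growth_set: "\<And>r. r \<ge> 0 \<Longrightarrow> finite (growth_set G H l r)"
    and convex: "convex Q" and action: "affine_action_on G Q \<alpha>"
    and q0_in: "q0 \<in> Q" and q0_fixed: "\<And>h. h \<in> H \<Longrightarrow> \<alpha> h q0 = q0"
begin

sublocale group G by (rule group)

abbreviation "N r \<equiv> real (growth_fun G H l r)"

lemma H_subset: "H \<subseteq> carrier G"
  using subgroup by (rule subgroup.subset)

lemma length_nonneg: "g \<in> carrier G \<Longrightarrow> 0 \<le> l g"
  and length_one: "l \<one> = 0"
  and length_inv: "g \<in> carrier G \<Longrightarrow> l (inv g) = l g"
  and length_mult: "g \<in> carrier G \<Longrightarrow> h \<in> carrier G \<Longrightarrow> l (g \<otimes> h) \<le> l g + l h"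
  and length_H: "h \<in> H \<Longrightarrow> l h = 0"
  using length_function unfolding length_function_def by auto

lemma action_closed: "g \<in> carrier G \<Longrightarrow> x \<in> Q \<Longrightarrow> \<alpha> g x \<in> Q"
  and action_continuous: "g \<in> carrier G \<Longrightarrow> continuous_on Q (\<alpha> g)"
  and action_affine: "g \<in> carrier G \<Longrightarrow> x \<in> Q \<Longrightarrow> y \<in> Q \<Longrightarrow> 0 \<le> t \<Longrightarrow> t \<le> 1 \<Longrightarrow>
      \<alpha> g (t *\<^sub>R x + (1 - t) *\<^sub>R y) = t *\<^sub>R \<alpha> g x + (1 - t) *\<^sub>R \<alpha> g y"
  and action_mult: "g \<in> carrier G \<Longrightarrow> h \<in> carrier G \<Longrightarrow> x \<in> Q \<Longrightarrow> \<alpha> (g \<otimes> h) x = \<alpha> g (\<alpha> h x)"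
  using action unfolding affine_action_on_def by blast+

lemma length_rcos_le:
  assumes "x \<in> carrier G" "y \<in> carrier G" "H #> x = H #> y"
  shows "l x \<le> l y"
proof -
  have "x \<in> H #> y" using rcos_self[OF assms(1) subgroup] assms(3) by simp
  then obtain h where "h \<in> H" "x = h \<otimes> y" unfolding r_coset_def by auto
  then show ?thesis using length_mult[of h y] length_H H_subset assms(2) by auto
qed

lemma rcos_in_growth_set_iff:
  "x \<in> carrier G \<Longrightarrow> H #> x \<in> growth_set G H l r \<longleftrightarrow> l x \<le> r"
  unfolding growth_set_def using length_rcos_le by fastforce

lemma growth_set_mono: "r \<le> s \<Longrightarrow> growth_set G H l r \<subseteq> growth_set G H l s"
  unfolding growth_set_def by fastforce

lemma growth_fun_ge_1:
  assumes "r \<ge> 0"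
  shows "N r \<ge> 1"
proof -
  have "H #> \<one> \<in> growth_set G H l r"
    using rcos_in_growth_set_iff[of \<one> r] length_one assms by simp
  then show ?thesis
    using finite_growth_set[OF assms] card_gt_0_iff unfolding growth_fun_def
    by (metis One_nat_def Suc_leI empty_iff of_nat_1 of_nat_le_iff)
qed

text \<open>The orbit map H\<backslash>G \<rightarrow> Q, Hx \<mapsto> x\<inverse> q0; the choice of representative is harmless because
  q0 is H-fixed.\<close>
definition orbit_point :: "'g set \<Rightarrow> 'v" where
  "orbit_point C = \<alpha> (inv (SOME x. x \<in> C)) q0"

lemma orbit_point_rcos:
  assumes x: "x \<in> carrier G"
  shows "orbit_point (H #> x) = \<alpha> (inv x) q0"
proof -
  define y where "y = (SOME y. y \<in> H #> x)"
  have "y \<in> H #> x" unfolding y_def using rcos_self[OF x subgroup] by (rule someI)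
  then obtain h where h: "h \<in> H" "y = h \<otimes> x" unfolding r_coset_def by auto
  then have "h \<in> carrier G" using H_subset by auto
  have "orbit_point (H #> x) = \<alpha> (inv x \<otimes> inv h) q0"
    unfolding orbit_point_def y_def[symmetric] using h \<open>h \<in> carrier G\<close> x by (simp add: inv_mult_group)
  also have "\<dots> = \<alpha> (inv x) (\<alpha> (inv h) q0)"
    using action_mult \<open>h \<in> carrier G\<close> x q0_in by simp
  also have "\<dots> = \<alpha> (inv x) q0"
    using q0_fixed subgroup.m_inv_closed[OF subgroup h(1)] by simp
  finally show ?thesis .
qed

lemma orbit_point_in: "C \<in> growth_set G H l r \<Longrightarrow> orbit_point C \<in> Q"
  unfolding growth_set_def using orbit_point_rcos action_closed q0_in by auto

lemma action_orbit_point: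
  assumes "x \<in> carrier G" "g \<in> carrier G"
  shows "\<alpha> g (orbit_point (H #> x)) = orbit_point ((H #> x) #> inv g)"
proof -
  have "\<alpha> g (orbit_point (H #> x)) = \<alpha> (g \<otimes> inv x) q0"
    using orbit_point_rcos action_mult assms q0_in by simp
  also have "g \<otimes> inv x = inv (x \<otimes> inv g)"
    using assms by (simp add: inv_mult_group)
  finally show ?thesis
    using orbit_point_rcos assms coset_mult_assoc[OF H_subset] by simp
qed

lemma rcos_translate_inj_on: "g \<in> carrier G \<Longrightarrow> inj_on (\<lambda>C. C #> inv g) (growth_set G H l r)"
  by (rule inj_on_inverseI[where g = "\<lambda>C. C #> g"])
    (auto simp: growth_set_def coset_mult_assoc[OF H_subset] m_assoc)

lemma rcos_translate_growth_set:
  assumes "g \<in> carrier G" "C \<in> growth_set G H l r"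
  shows "C #> inv g \<in> growth_set G H l (r + l g)"
proof -
  obtain x where x: "C = H #> x" "x \<in> carrier G" "l x \<le> r"
    using assms(2) unfolding growth_set_def by auto
  have "l (x \<otimes> inv g) \<le> r + l g"
    using length_mult[of x "inv g"] length_inv assms(1) x by simp
  then show ?thesis
    using rcos_in_growth_set_iff x assms(1) coset_mult_assoc[OF H_subset] by simp
qed

definition average :: "real \<Rightarrow> 'v" where
  "average r = (1 / N r) *\<^sub>R (\<Sum>C\<in>growth_set G H l r. orbit_point C)"

lemma average_in: "r \<ge> 0 \<Longrightarrow> average r \<in> Q"
  using convex_sum[OF finite_growth_set convex, of r "\<lambda>_. 1 / N r" orbit_point]
    growth_fun_ge_1[of r] orbit_point_in
  by (simp add: average_def scaleR_sum_right growth_fun_def)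


lemma growth_fun_mono: "0 \<le> r \<Longrightarrow> r \<le> s \<Longrightarrow> N r \<le> N s"
  unfolding growth_fun_def using card_mono[OF finite_growth_set growth_set_mono] by simp

lemma action_average:
  assumes "r \<ge> 0" "g \<in> carrier G"
  shows "\<alpha> g (average r) =
    (1 / N r) *\<^sub>R (\<Sum>C\<in>(\<lambda>C. C #> inv g) ` growth_set G H l r. orbit_point C)"
proof -
  let ?B = "growth_set G H l r"
  have "average r = (\<Sum>C\<in>?B. (1 / N r) *\<^sub>R orbit_point C)"
    by (simp add: average_def scaleR_sum_right)
  then have "\<alpha> g (average r) = (\<Sum>C\<in>?B. (1 / N r) *\<^sub>R \<alpha> g (orbit_point C))"
    using affine_on_convex_sum[OF convex action_affine[OF assms(2)] finite_growth_set[OF assms(1)]]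
      growth_fun_ge_1[OF assms(1)] orbit_point_in
    by (simp add: growth_fun_def)
  also have "\<dots> = (\<Sum>C\<in>?B. (1 / N r) *\<^sub>R orbit_point (C #> inv g))"
    using action_orbit_point assms(2) by (intro sum.cong) (auto simp: growth_set_def)
  also have "\<dots> = (1 / N r) *\<^sub>R (\<Sum>C\<in>(\<lambda>C. C #> inv g) ` ?B. orbit_point C)"
    by (simp add: scaleR_sum_right sum.reindex[OF rcos_translate_inj_on[OF assms(2)]])
  finally show ?thesis .
qed

text \<open>The sums over the ball and over its translate differ only on the shell between the radii
  r and r + l g.\<close>
lemma average_almost_invariant:
  assumes "r \<ge> 0" "g \<in> carrier G"
  shows "\<alpha> g (average r) - average r \<in> scaled_differences ((N (r + l g) - N r) / N r) Q"
proof -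
  define B where "B = growth_set G H l r"
  define B' where "B' = growth_set G H l (r + l g)"
  define A where "A = (\<lambda>C. C #> inv g) ` B"
  have "r + l g \<ge> 0" using assms length_nonneg by (simp add: add_nonneg_nonneg)
  then have "finite B'" unfolding B'_def by (rule finite_growth_set)
  have "finite B" unfolding B_def using assms(1) by (rule finite_growth_set)
  have "card A = card B"
    unfolding A_def B_def using rcos_translate_inj_on[OF assms(2)] by (rule card_image)
  have "A \<subseteq> B'" unfolding A_def B_def B'_def using rcos_translate_growth_set assms(2) by blast
  have "B \<subseteq> B'" unfolding B_def B'_def using growth_set_mono length_nonneg assms(2) by simp
  obtain a b where "a \<in> Q" "b \<in> Q" and ab: "sum orbit_point A - sum orbit_point B = real (card (A - B)) *\<^sub>R (a - b)"
    using sum_diff_eq_card_diff_scaleR_convex[OF convex _ finite_subset[OF \<open>A \<subseteq> B'\<close> \<open>finite B'\<close>]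
        \<open>finite B\<close> \<open>card A = card B\<close>, of orbit_point]
      q0_in orbit_point_in \<open>A \<subseteq> B'\<close> \<open>B \<subseteq> B'\<close> unfolding B'_def by blast
  have "card (A - B) \<le> card (B' - B)"
    using \<open>A \<subseteq> B'\<close> \<open>finite B'\<close> by (intro card_mono) auto
  also have "\<dots> = card B' - card B"
    using \<open>finite B\<close> \<open>B \<subseteq> B'\<close> by (rule card_Diff_subset)
  finally have "real (card (A - B)) \<le> N (r + l g) - N r"
    using card_mono[OF \<open>finite B'\<close> \<open>B \<subseteq> B'\<close>] unfolding B_def B'_def growth_fun_def by linarith
  then have "real (card (A - B)) / N r \<le> (N (r + l g) - N r) / N r"
    using growth_fun_ge_1[OF assms(1)] by (simp add: divide_right_mono)
  moreover have "\<alpha> g (average r) - average r = (real (card (A - B)) / N r) *\<^sub>R (a - b)"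
    using action_average[OF assms] ab unfolding average_def A_def B_def
    by (simp add: scaleR_diff_right[symmetric])
  ultimately show ?thesis
    unfolding scaled_differences_def using \<open>a \<in> Q\<close> \<open>b \<in> Q\<close> by fastforce
qed

lemma averages_asymptotically_invariant:
  assumes \<rho>: "\<And>k. \<rho> k \<ge> 0" "\<And>k. N (\<rho> k + real (Suc k)) \<le> (1 + 1 / real (Suc k)) * N (\<rho> k)"
    and g: "g \<in> carrier G" and "\<epsilon> > 0"
  shows "eventually (\<lambda>k. \<alpha> g (average (\<rho> k)) - average (\<rho> k) \<in> scaled_differences \<epsilon> Q) sequentially"
proof (rule eventually_sequentiallyI)
  fix k assume k: "nat \<lceil>max (l g) (1 / \<epsilon>)\<rceil> \<le> k"
  then have "l g \<le> real (Suc k)" "1 / \<epsilon> \<le> real (Suc k)" by linarith+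
  define r where "r = \<rho> k"
  have "N r \<ge> 1" using growth_fun_ge_1 \<rho>(1) by (simp add: r_def)
  have "N (r + l g) - N r \<le> N (r + real (Suc k)) - N r"
    using growth_fun_mono[of "r + l g"] \<rho>(1) length_nonneg[OF g] \<open>l g \<le> real (Suc k)\<close>
    by (simp add: r_def)
  also have "\<dots> \<le> (1 / real (Suc k)) * N r"
    using \<rho>(2)[of k] by (simp add: r_def algebra_simps)
  finally have "(N (r + l g) - N r) / N r \<le> 1 / real (Suc k)"
    using \<open>N r \<ge> 1\<close> by (simp add: divide_le_eq)
  also have "\<dots> \<le> \<epsilon>"
    using \<open>1 / \<epsilon> \<le> real (Suc k)\<close> \<open>\<epsilon> > 0\<close> by (simp add: divide_le_eq mult.commute)
  finally show "\<alpha> g (average (\<rho> k)) - average (\<rho> k) \<in> scaled_differences \<epsilon> Q"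
    using average_almost_invariant[OF \<rho>(1) g] scaled_differences_mono unfolding r_def by blast
qed

end


theorem proposition4p5:
  fixes G :: "('g, 'b) monoid_scheme" and H S :: "'g set" and l :: "'g \<Rightarrow> real"
  assumes "hecke_pair G H"
    and "finite S" and "generates_hecke G H S"
    and "length_function G H l"
    and "subexp_growth G H l"
  shows "hecke_amenable_in TYPE('v::{real_vector, t2_space}) G H"
  unfolding hecke_amenable_in_def
proof (intro impI allI)
  fix Q :: "'v set" and \<alpha> :: "'g \<Rightarrow> 'v \<Rightarrow> 'v"
  assume "lctvs TYPE('v)"
  then have add: "continuous_on UNIV (\<lambda>p::'v \<times> 'v. fst p + snd p)"
    and scale: "continuous_on UNIV (\<lambda>p::real \<times> 'v. fst p *\<^sub>R snd p)"
    unfolding lctvs_def by auto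
  assume "compact Q \<and> convex Q \<and> affine_action_on G Q \<alpha> \<and> (\<exists>q\<in>Q. \<forall>h\<in>H. \<alpha> h q = q)"
  then obtain q0 where "compact Q" "convex Q" "affine_action_on G Q \<alpha>" "q0 \<in> Q" "\<forall>h\<in>H. \<alpha> h q0 = q0"
    by blast
  with assms(1,4,5) have hecke: "hecke_affine_action G H l Q \<alpha> q0"
    unfolding hecke_affine_action_def hecke_pair_def subexp_growth_def by simp
  interpret hecke_affine_action G H l Q \<alpha> q0 by (fact hecke)
  have lim: "((\<lambda>r. ln (N r) / r) \<longlongrightarrow> 0) at_top"
    using assms(5) unfolding subexp_growth_def by simp
  have "\<exists>r\<ge>0. N (r + real (Suc k)) \<le> (1 + 1 / real (Suc k)) * N r" for k
    by (rule subexponential_growth_imp_slow_shell[OF growth_fun_ge_1 lim zero_less_Suc])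
  then obtain \<rho> where \<rho>: "\<And>k. \<rho> k \<ge> 0" "\<And>k. N (\<rho> k + real (Suc k)) \<le> (1 + 1 / real (Suc k)) * N (\<rho> k)"
    by metis
  obtain p where "p \<in> Q" and fixed: "\<And>T. continuous_on Q T \<Longrightarrow>
      ((\<lambda>k. T (average (\<rho> k)) - average (\<rho> k)) \<longlongrightarrow> 0) sequentially \<Longrightarrow> T p = p"
    using compact_asymptotically_invariant_cluster_point[where q = "\<lambda>k. average (\<rho> k)",
          OF add \<open>compact Q\<close> average_in[OF \<rho>(1)]] by blast
  have "\<alpha> g p = p" if "g \<in> carrier G" for g
    by (intro fixed action_continuous that tendsto_zero_scaled_differences[OF add scale \<open>compact Q\<close>]
        averages_asymptotically_invariant[OF \<rho> that])
  then show "\<exists>q\<in>Q. \<forall>g\<in>carrier G. \<alpha> g q = q" using \<open>p \<in> Q\<close> by blast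
qed

end
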